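(* Let $(T,d)$ be a real tree. Then: (1) $\mathcal S\subset\mathcal B_0\subset\mathcal G$ and $\overline{\mathcal S}\subset\mathcal G$; (2) if $T$ is separable, then $\mathcal B_0=\mathcal B$ and $\overline{\mathcal S}=\mathcal G$.
   Context: A real tree is a geodesic $0$-hyperbolic (in the sense of Gromov) metric space; $[x,y]$ denotes the unique arc (segment) joining $x$ and $y$. $\mathcal G$ is the $\sigma$-algebra of subsets $S\subset T$ such that $S\cap[x,y]$ is Lebesgue-measurable in $[x,y]$ (identified isometrically with a real interval) for all $x,y\in T$; on it, the length measure is $\lambda(S)=\sup_R\sum_{i=1}^k\mathrm{Leb}_{S_i}(S_i\cap S)$, the supremum over finite disjoint unions $R=\bigcup_{i=1}^kS_i$ of segments. $\mathcal S$ is the $\sigma$-algebra generated by segments; $\overline{\mathcal S}$ is its completion with respect to $\lambda$-negligible sets (i.e. by adding subsets of sets in $\mathcal S$ of $\lambda$-measure zero); $\mathcal B$ is the Borel $\sigma$-algebra (generated by open sets); $\mathcal B_0$ is the $\sigma$-algebra generated by open balls. *)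

theory Defs
  imports "HOL-Analysis.Analysis"
begin

definition geodesic_path :: "(real \<Rightarrow> 'a::metric_space) \<Rightarrow> 'a \<Rightarrow> 'a \<Rightarrow> bool" where
  "geodesic_path \<gamma> x y \<longleftrightarrow> \<gamma> 0 = x \<and> \<gamma> (dist x y) = y \<and>
     (\<forall>s\<in>{0..dist x y}. \<forall>t\<in>{0..dist x y}. dist (\<gamma> s) (\<gamma> t) = \<bar>s - t\<bar>)"

definition geodesic_space :: "'a::metric_space set \<Rightarrow> bool" where
  "geodesic_space T \<longleftrightarrow> (\<forall>x\<in>T. \<forall>y\<in>T. \<exists>\<gamma>. geodesic_path \<gamma> x y \<and> \<gamma> ` {0..dist x y} \<subseteq> T)"

definition gromov_product :: "'a::metric_space \<Rightarrow> 'a \<Rightarrow> 'a \<Rightarrow> real" where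
  "gromov_product w x y = (dist x w + dist y w - dist x y) / 2"

definition gromov_hyperbolic :: "real \<Rightarrow> 'a::metric_space set \<Rightarrow> bool" where
  "gromov_hyperbolic \<delta> T \<longleftrightarrow> (\<forall>x\<in>T. \<forall>y\<in>T. \<forall>z\<in>T. \<forall>w\<in>T.
     gromov_product w x y \<ge> min (gromov_product w x z) (gromov_product w y z) - \<delta>)"

definition real_tree :: "'a::metric_space set \<Rightarrow> bool" where
  "real_tree T \<longleftrightarrow> geodesic_space T \<and> gromov_hyperbolic 0 T"

text \<open>The (in a real tree unique) geodesic parametrisation of the segment [x,y], and the segment.\<close>
definition seg_param :: "'a::metric_space \<Rightarrow> 'a \<Rightarrow> real \<Rightarrow> 'a" where
  "seg_param x y = (SOME \<gamma>. geodesic_path \<gamma> x y)"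

definition segment_rt :: "'a::metric_space \<Rightarrow> 'a \<Rightarrow> 'a set" where
  "segment_rt x y = seg_param x y ` {0..dist x y}"

text \<open>S \<inter> [x,y], transported to the real interval [0, d(x,y)] via the isometric identification.\<close>
definition seg_trace :: "'a::metric_space \<Rightarrow> 'a \<Rightarrow> 'a set \<Rightarrow> real set" where
  "seg_trace x y S = {t \<in> {0..dist x y}. seg_param x y t \<in> S}"

definition G_sets :: "'a::metric_space set set" where
  "G_sets = {S. \<forall>x y. seg_trace x y S \<in> sets lebesgue}"

definition length_measure :: "'a::metric_space set \<Rightarrow> ennreal" where
  "length_measure S = (SUP p \<in> {(n, f :: nat \<Rightarrow> 'a \<times> 'a). \<forall>i<n. \<forall>j<n. i \<noteq> j \<longrightarrow>
          segment_rt (fst (f i)) (snd (f i)) \<inter> segment_rt (fst (f j)) (snd (f j)) = {}}.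
     (\<Sum>i<fst p. emeasure lebesgue (seg_trace (fst (snd p i)) (snd (snd p i)) S)))"

definition S_sets :: "'a::metric_space set set" where
  "S_sets = sigma_sets UNIV {segment_rt x y | x y. True}"

definition S_completion :: "'a::metric_space set set" where
  "S_completion = {A \<union> N | A N. A \<in> S_sets \<and> (\<exists>M \<in> S_sets. N \<subseteq> M \<and> length_measure M = 0)}"

definition B0_sets :: "'a::metric_space set set" where
  "B0_sets = sigma_sets UNIV {ball x r | x r. True}"

definition separable_metric :: "'a::metric_space set \<Rightarrow> bool" where
  "separable_metric T \<longleftrightarrow> (\<exists>D\<subseteq>T. countable D \<and> T \<subseteq> closure D)"

end

theory Submission
  imports Defs
begin

text \<open>
  In a real tree the segment \<open>[x,y]\<close> is the set of points \<open>z\<close> with \<open>d(x,z) + d(z,y) = d(x,y)\<close>,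
  and its parametrisation is an isometry of \<open>[0, d(x,y)]\<close> onto it. Hence a ball traces a relatively
  open set on every segment (\<open>\<B>\<^sub>0 \<subseteq> \<G>\<close>), and a segment, being compact, is a countable intersection
  of countable unions of balls (\<open>\<S> \<subseteq> \<B>\<^sub>0\<close>). Length-null sets have null traces, so
  \<open>\<S>\<close>-completion \<open>\<subseteq> \<G>\<close>.

  If \<open>D\<close> is countable and dense, open sets are countable unions of balls with centres in \<open>D\<close>
  and rational radii. By 0-hyperbolicity every point of a segment other than its endpoints lies
  on a segment \<open>[a,b]\<close> with \<open>a, b \<in> D\<close>, so the complement of the countable union of these
  segments is length-null. A set \<open>X \<in> \<G>\<close> is then the union of a set in \<open>\<S>\<close>, namely the
  images in the segments \<open>[a,b]\<close>, \<open>a, b \<in> D\<close>, of Borel kernels of the traces of \<open>X\<close>, and a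
  subset of a length-null set in \<open>\<S>\<close>.
\<close>

section \<open>Sigma-algebras and segment traces in a metric space\<close>

interpretation S: sigma_algebra UNIV S_sets
  unfolding S_sets_def by (rule sigma_algebra_sigma_sets) auto

interpretation B0: sigma_algebra UNIV B0_sets
  unfolding B0_sets_def by (rule sigma_algebra_sigma_sets) auto

lemma segment_rt_in_S_sets: "segment_rt x y \<in> S_sets"
  unfolding S_sets_def by (rule sigma_sets.Basic) blast

lemma ball_in_B0_sets: "ball x r \<in> B0_sets"
  unfolding B0_sets_def by (rule sigma_sets.Basic) blast

lemma seg_trace_mono: "S \<subseteq> S' \<Longrightarrow> seg_trace x y S \<subseteq> seg_trace x y S'"
  unfolding seg_trace_def by auto

lemma seg_trace_Un: "seg_trace x y (S \<union> S') = seg_trace x y S \<union> seg_trace x y S'"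
  unfolding seg_trace_def by auto

lemma seg_trace_UN: "seg_trace x y (\<Union>i\<in>I. S i) = (\<Union>i\<in>I. seg_trace x y (S i))"
  unfolding seg_trace_def by auto

lemma seg_trace_Compl: "seg_trace x y (- S) = {0..dist x y} - seg_trace x y S"
  unfolding seg_trace_def by auto

interpretation G: sigma_algebra "UNIV :: 'a::metric_space set" G_sets
  unfolding sigma_algebra_iff2
proof (intro conjI allI ballI impI)
  show "G_sets \<subseteq> Pow UNIV" by simp
  show "{} \<in> G_sets" unfolding G_sets_def seg_trace_def by simp
next
  fix S :: "'a set" assume S: "S \<in> G_sets"
  show "UNIV - S \<in> G_sets" unfolding G_sets_def
  proof (intro CollectI allI)
    fix x y :: 'a
    have "{0..dist x y} - seg_trace x y S \<in> sets lebesgue"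
      using S unfolding G_sets_def by (intro sets.Diff) auto
    then show "seg_trace x y (UNIV - S) \<in> sets lebesgue"
      by (simp add: Compl_eq_Diff_UNIV[symmetric] seg_trace_Compl)
  qed
next
  fix A :: "nat \<Rightarrow> 'a set" assume A: "range A \<subseteq> G_sets"
  show "(\<Union>i. A i) \<in> G_sets" unfolding G_sets_def
  proof (intro CollectI allI)
    fix x y :: 'a
    have "seg_trace x y (A i) \<in> sets lebesgue" for i
      using A unfolding G_sets_def by auto
    then show "seg_trace x y (\<Union>i. A i) \<in> sets lebesgue"
      by (auto simp: seg_trace_UN)
  qed
qed

lemma emeasure_seg_trace_le_length_measure:
  "emeasure lebesgue (seg_trace x y S) \<le> length_measure S"
  unfolding length_measure_def by (rule SUP_upper2[of "(1, \<lambda>_. (x, y))"]) auto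

lemma length_measure_eq_0_iff:
  "length_measure S = 0 \<longleftrightarrow> (\<forall>x y. emeasure lebesgue (seg_trace x y S) = 0)"
proof
  assume "length_measure S = 0"
  then show "\<forall>x y. emeasure lebesgue (seg_trace x y S) = 0"
    using emeasure_seg_trace_le_length_measure[of _ _ S] by (metis le_zero_eq)
next
  assume "\<forall>x y. emeasure lebesgue (seg_trace x y S) = 0"
  then have "length_measure S \<le> 0"
    unfolding length_measure_def by (intro SUP_least) simp
  then show "length_measure S = 0" by simp
qed

lemma lebesgue_set_between_borel:
  fixes A :: "'a::euclidean_space set"
  assumes "A \<in> sets lebesgue"
  obtains B N where "B \<in> sets borel" "N \<in> sets borel" "negligible N" "B \<subseteq> A" "A \<subseteq> B \<union> N"
proof -
  from assms obtain B N N' where "A = B \<union> N" "N \<subseteq> N'" "N' \<in> null_sets lborel" "B \<in> sets lborel"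
    by (rule sets_completionE)
  moreover have "negligible N'"
    using \<open>N' \<in> null_sets lborel\<close> by (metis null_sets_completionI negligible_iff_null_sets)
  moreover have "N' \<in> sets borel"
    using \<open>N' \<in> null_sets lborel\<close> by (metis null_setsD2 sets_lborel)
  ultimately show thesis
    using that[of B N'] by auto
qed

lemma closed_in_B0_sets:
  fixes C D :: "'a::metric_space set"
  assumes "closed C" "countable D" "D \<subseteq> C"
    and dense: "\<And>z e. z \<in> C \<Longrightarrow> 0 < e \<Longrightarrow> \<exists>a\<in>D. dist a z < e"
  shows "C \<in> B0_sets"
proof -
  have "C = (\<Inter>n. \<Union>a\<in>D. ball a (1 / Suc n))"
  proof (intro set_eqI iffI)
    fix z assume "z \<in> C"
    show "z \<in> (\<Inter>n. \<Union>a\<in>D. ball a (1 / Suc n))"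
    proof
      fix n
      obtain a where "a \<in> D" "dist a z < 1 / Suc n" using dense[OF \<open>z \<in> C\<close>, of "1 / Suc n"] by auto
      then show "z \<in> (\<Union>a\<in>D. ball a (1 / Suc n))" by auto
    qed
  next
    fix z assume z: "z \<in> (\<Inter>n. \<Union>a\<in>D. ball a (1 / Suc n))"
    have "\<exists>a\<in>D. dist a z < e" if "0 < e" for e
    proof -
      obtain n where "1 / Suc n < e" using \<open>0 < e\<close> by (rule nat_approx_posE)
      moreover have "z \<in> (\<Union>a\<in>D. ball a (1 / Suc n))" using z by blast
      then obtain a where "a \<in> D" "dist a z < 1 / Suc n" by auto
      ultimately show ?thesis using order.strict_trans by blast
    qed
    then have "z \<in> closure D" by (simp add: closure_approachable)
    then show "z \<in> C" using assms(1,3) closure_minimal by blast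
  qed
  also have "\<dots> \<in> B0_sets"
    using \<open>countable D\<close> by (intro B0.countable_INT B0.countable_UN'') (auto simp: ball_in_B0_sets)
  finally show ?thesis .
qed

lemma open_in_B0_sets:
  fixes D U :: "'a::metric_space set"
  assumes "countable D" and dense: "\<And>z e. 0 < e \<Longrightarrow> \<exists>a\<in>D. dist a z < e" and "open U"
  shows "U \<in> B0_sets"
proof -
  define P where "P = {(a, r) \<in> D \<times> \<rat>. ball a r \<subseteq> U}"
  have "U = (\<Union>(a, r)\<in>P. ball a r)"
  proof (intro set_eqI iffI)
    fix z assume "z \<in> U"
    then obtain e where "0 < e" "ball z e \<subseteq> U" using \<open>open U\<close> open_contains_ball by blast
    obtain a where "a \<in> D" "dist a z < e / 4" using dense[of "e / 4"] \<open>0 < e\<close> by auto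
    obtain r where "r \<in> \<rat>" "e / 4 < r" "r < e / 2"
      using Rats_dense_in_real[of "e / 4" "e / 2"] \<open>0 < e\<close> by auto
    have "ball a r \<subseteq> ball z e"
    proof
      fix w assume "w \<in> ball a r"
      then show "w \<in> ball z e"
        using dist_triangle[of z w a] \<open>dist a z < e / 4\<close> \<open>r < e / 2\<close> \<open>0 < e\<close>
        by (simp add: dist_commute)
    qed
    then have "(a, r) \<in> P" using \<open>a \<in> D\<close> \<open>r \<in> \<rat>\<close> \<open>ball z e \<subseteq> U\<close> unfolding P_def by auto
    moreover have "z \<in> ball a r" using \<open>dist a z < e / 4\<close> \<open>e / 4 < r\<close> by simp
    ultimately show "z \<in> (\<Union>(a, r)\<in>P. ball a r)" by blast
  qed (auto simp: P_def)
  also have "\<dots> \<in> B0_sets"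
  proof (intro B0.countable_UN'')
    have "P \<subseteq> D \<times> \<rat>" unfolding P_def by auto
    then show "countable P"
      using \<open>countable D\<close> countable_rat by (blast intro: countable_subset countable_SIGMA)
  qed (auto simp: ball_in_B0_sets)
  finally show ?thesis .
qed

lemma separable_metricE:
  assumes "separable_metric (UNIV :: 'a::metric_space set)"
  obtains D :: "'a::metric_space set" where "countable D" "\<And>z e. 0 < e \<Longrightarrow> \<exists>a\<in>D. dist a z < e"
proof -
  obtain D :: "'a set" where "countable D" "UNIV \<subseteq> closure D"
    using assms unfolding separable_metric_def by blast
  moreover have "\<exists>a\<in>D. dist a z < e" if "0 < e" "z \<in> closure D" for z e
    using that closure_approachable by blast
  ultimately show thesis using that[of D] by blast
qed

lemma B0_sets_eq_borel:
  assumes "separable_metric (UNIV :: 'a::metric_space set)"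
  shows "(B0_sets :: 'a set set) = sets borel"
proof
  show "(B0_sets :: 'a set set) \<subseteq> sets borel"
    unfolding B0_sets_def sets_borel by (rule sigma_sets_subseteq) auto
  obtain D :: "'a set" where "countable D" "\<And>z e. 0 < e \<Longrightarrow> \<exists>a\<in>D. dist a z < e"
    using separable_metricE[OF assms] by blast
  then show "sets borel \<subseteq> (B0_sets :: 'a set set)"
    unfolding sets_borel by (intro B0.sigma_sets_subset) (auto intro: open_in_B0_sets)
qed

lemma S_completionI:
  "A \<in> S_sets \<Longrightarrow> M \<in> S_sets \<Longrightarrow> N \<subseteq> M \<Longrightarrow> length_measure M = 0 \<Longrightarrow> A \<union> N \<in> S_completion"
  unfolding S_completion_def by blast

definition seg_image :: "'a::metric_space \<Rightarrow> 'a \<Rightarrow> real set \<Rightarrow> 'a set" where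
  "seg_image x y B = seg_param x y ` (B \<inter> {0..dist x y})"

lemma seg_image_seg_trace: "seg_image x y (seg_trace x y S) = S \<inter> segment_rt x y"
  unfolding seg_image_def seg_trace_def segment_rt_def by auto

lemma seg_image_mono: "B \<subseteq> B' \<Longrightarrow> seg_image x y B \<subseteq> seg_image x y B'"
  unfolding seg_image_def by auto

lemma seg_image_Un: "seg_image x y (B \<union> B') = seg_image x y B \<union> seg_image x y B'"
  unfolding seg_image_def by auto

definition skeleton :: "'a::metric_space set \<Rightarrow> 'a set" where
  "skeleton D = (\<Union>a\<in>D. \<Union>b\<in>D. segment_rt a b)"

lemma skeleton_in_S_sets: "countable D \<Longrightarrow> skeleton D \<in> S_sets"
  unfolding skeleton_def by (intro S.countable_UN'' segment_rt_in_S_sets)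

lemma UN_seg_image_subset:
  assumes "\<And>a b. B a b \<subseteq> seg_trace a b X"
  shows "(\<Union>a\<in>D. \<Union>b\<in>D. seg_image a b (B a b)) \<subseteq> X"
proof -
  have "seg_image a b (B a b) \<subseteq> X" for a b
    using seg_image_mono[OF assms[of a b], of a b] by (simp add: seg_image_seg_trace)
  then show ?thesis by blast
qed

lemma Diff_UN_seg_image_subset:
  assumes "\<And>a b. seg_trace a b X \<subseteq> B a b \<union> N a b"
  shows "X - (\<Union>a\<in>D. \<Union>b\<in>D. seg_image a b (B a b))
    \<subseteq> - skeleton D \<union> (\<Union>a\<in>D. \<Union>b\<in>D. seg_image a b (N a b))"
proof
  fix z assume z: "z \<in> X - (\<Union>a\<in>D. \<Union>b\<in>D. seg_image a b (B a b))"
  show "z \<in> - skeleton D \<union> (\<Union>a\<in>D. \<Union>b\<in>D. seg_image a b (N a b))"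
  proof (cases "z \<in> skeleton D")
    case True
    then obtain a b where "a \<in> D" "b \<in> D" "z \<in> X \<inter> segment_rt a b"
      using z unfolding skeleton_def by blast
    moreover have "X \<inter> segment_rt a b \<subseteq> seg_image a b (B a b) \<union> seg_image a b (N a b)"
      using seg_image_mono[OF assms[of a b], of a b] by (simp add: seg_image_seg_trace seg_image_Un)
    ultimately show ?thesis using z by blast
  qed simp
qed

section \<open>Segments of a real tree\<close>

context
  assumes real_tree: "real_tree (UNIV :: 'a::metric_space set)"
begin

lemma geodesic_path_seg_param: "geodesic_path (seg_param x y) x (y :: 'a)"
proof -
  from real_tree have "\<exists>\<gamma>. geodesic_path \<gamma> x y"
    unfolding real_tree_def geodesic_space_def by blast
  then show ?thesis unfolding seg_param_def by (rule someI_ex)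
qed

lemma seg_param_0 [simp]: "seg_param x y 0 = (x :: 'a)"
  and seg_param_dist [simp]: "seg_param x y (dist x y) = (y :: 'a)"
  using geodesic_path_seg_param[of x y] unfolding geodesic_path_def by auto

lemma dist_seg_param:
  fixes x y :: 'a
  assumes "s \<in> {0..dist x y}" "t \<in> {0..dist x y}"
  shows "dist (seg_param x y s) (seg_param x y t) = \<bar>s - t\<bar>"
  using geodesic_path_seg_param[of x y] assms unfolding geodesic_path_def by blast

lemma dist_seg_param_left: "t \<in> {0..dist x y} \<Longrightarrow> dist x (seg_param x y t) = t"
  and dist_seg_param_right: "t \<in> {0..dist x y} \<Longrightarrow> dist (seg_param x y t) y = dist x (y :: 'a) - t"
  using dist_seg_param[of 0 x y t] dist_seg_param[of t x y "dist x y"] by auto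

lemma gromov_product_min_le:
  "min (gromov_product w x z) (gromov_product w y z) \<le> gromov_product w x (y :: 'a)"
  using real_tree unfolding real_tree_def gromov_hyperbolic_def by auto

lemma seg_param_unique:
  fixes x y z :: 'a
  assumes between: "dist x z + dist z y = dist x y"
  shows "seg_param x y (dist x z) = z"
proof -
  let ?t = "dist x z" let ?p = "seg_param x y ?t"
  have t: "?t \<in> {0..dist x y}"
    using between zero_le_dist[of z y] zero_le_dist[of x z] unfolding atLeastAtMost_iff by linarith
  have "min (gromov_product x z y) (gromov_product x ?p y) \<le> gromov_product x z ?p"
    by (rule gromov_product_min_le)
  moreover have "gromov_product x z y = ?t" "gromov_product x ?p y = ?t"
    using between dist_seg_param_left[OF t] dist_seg_param_right[OF t]
    by (simp_all add: gromov_product_def dist_commute)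
  ultimately have "?t \<le> gromov_product x z ?p" by simp
  then have "dist z ?p \<le> 0"
    using dist_seg_param_left[OF t] unfolding gromov_product_def by (simp add: dist_commute)
  then show ?thesis by simp
qed

lemma segment_rt_eq_between: "segment_rt x y = {z. dist x z + dist z y = dist x (y :: 'a)}"
proof (intro set_eqI iffI)
  fix z assume "z \<in> segment_rt x y"
  then obtain t where "t \<in> {0..dist x y}" "z = seg_param x y t" unfolding segment_rt_def by auto
  then show "z \<in> {z. dist x z + dist z y = dist x y}"
    by (simp add: dist_seg_param_left dist_seg_param_right)
next
  fix z assume "z \<in> {z. dist x z + dist z y = dist x y}"
  then have between: "dist x z + dist z y = dist x y" by simp
  then have "dist x z \<in> {0..dist x y}"
    using zero_le_dist[of z y] zero_le_dist[of x z] unfolding atLeastAtMost_iff by linarith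
  then show "z \<in> segment_rt x y"
    unfolding segment_rt_def using seg_param_unique[OF between] by (metis image_eqI)
qed

lemma between_move_endpoint:
  fixes a x y z :: 'a
  assumes "dist x z + dist z y = dist x y" "dist x a < dist x z"
  shows "dist a z + dist z y = dist a y"
proof -
  have "min (gromov_product z x a) (gromov_product z y a) \<le> gromov_product z x y"
    by (rule gromov_product_min_le)
  moreover have "gromov_product z x y = 0"
    using assms(1) by (simp add: gromov_product_def dist_commute)
  moreover have "dist x a < dist x z + dist a z"
    using assms(2) zero_le_dist[of a z] by linarith
  then have "gromov_product z x a > 0" unfolding gromov_product_def by simp
  ultimately have "gromov_product z y a \<le> 0" by linarith
  then show ?thesis
    using dist_triangle[of a y z] by (simp add: gromov_product_def dist_commute)
qed

lemma inj_on_seg_param: "inj_on (seg_param x y) {0..dist x (y :: 'a)}"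
  by (rule inj_onI) (use dist_seg_param in fastforce)

lemma continuous_on_seg_param: "continuous_on {0..dist x y} (seg_param x (y :: 'a))"
proof (rule lipschitz_on_continuous_on)
  show "1-lipschitz_on {0..dist x y} (seg_param x y)"
    by (rule lipschitz_onI) (simp_all add: dist_seg_param dist_real_def)
qed

lemma seg_image_atLeastAtMost:
  fixes x y :: 'a
  assumes ab: "0 \<le> a" "a \<le> b" "b \<le> dist x y"
  shows "seg_image x y {a..b} = segment_rt (seg_param x y a) (seg_param x y b)"
proof -
  let ?u = "seg_param x y a" and ?v = "seg_param x y b"
  have dist_uv: "dist ?u ?v = b - a" using ab by (simp add: dist_seg_param)
  show ?thesis unfolding seg_image_def segment_rt_eq_between dist_uv
  proof (intro set_eqI iffI)
    fix z assume "z \<in> seg_param x y ` ({a..b} \<inter> {0..dist x y})"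
    then obtain s where "s \<in> {a..b}" "z = seg_param x y s" by auto
    then show "z \<in> {z. dist ?u z + dist z ?v = b - a}" using ab by (simp add: dist_seg_param)
  next
    fix z assume "z \<in> {z. dist ?u z + dist z ?v = b - a}"
    then have between_uv: "dist ?u z + dist z ?v = b - a" by simp
    have "dist x ?u = a" "dist ?v y = dist x y - b"
      using ab by (simp_all add: dist_seg_param_left dist_seg_param_right)
    then have "dist x z \<le> a + dist ?u z" "dist z y \<le> dist z ?v + (dist x y - b)"
      using dist_triangle[of x z ?u] dist_triangle[of z y ?v] by linarith+
    then have between: "dist x z + dist z y = dist x y" and xz: "dist x z = a + dist ?u z"
      using between_uv dist_triangle[of x y z] by linarith+
    have "dist x z \<in> {a..b}"
      unfolding atLeastAtMost_iff xz using between_uv zero_le_dist[of ?u z] zero_le_dist[of z ?v]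
      by linarith
    then show "z \<in> seg_param x y ` ({a..b} \<inter> {0..dist x y})"
      using seg_param_unique[OF between] ab by (metis IntI atLeastAtMost_iff image_eqI order_trans)
  qed
qed

lemma ball_in_G_sets: "ball c r \<in> (G_sets :: 'a set set)"
  unfolding G_sets_def
proof (intro CollectI allI)
  fix x y :: 'a
  let ?F = "{t \<in> {0..dist x y}. r \<le> dist c (seg_param x y t)}"
  have "closed ?F"
    by (intro continuous_on_closed_Collect_le continuous_on_const continuous_on_dist
        continuous_on_seg_param) simp
  then have "{0..dist x y} - ?F \<in> sets lebesgue" by (intro sets.Diff) auto
  also have "{0..dist x y} - ?F = seg_trace x y (ball c r)"
    unfolding seg_trace_def by auto
  finally show "seg_trace x y (ball c r) \<in> sets lebesgue" .
qed

lemma B0_sets_subset_G_sets: "(B0_sets :: 'a set set) \<subseteq> G_sets"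
  unfolding B0_sets_def by (intro G.sigma_sets_subset) (auto simp: ball_in_G_sets)

lemma segment_rt_in_B0_sets: "segment_rt x y \<in> (B0_sets :: 'a set set)"
proof (rule closed_in_B0_sets)
  define clamp where "clamp q = max 0 (min (dist x y) q)" for q
  show "closed (segment_rt x y)"
    unfolding segment_rt_def
    by (intro compact_imp_closed compact_continuous_image continuous_on_seg_param compact_Icc)
  show "countable ((\<lambda>q. seg_param x y (clamp q)) ` \<rat>)"
    by (simp add: countable_rat)
  show "(\<lambda>q. seg_param x y (clamp q)) ` \<rat> \<subseteq> segment_rt x y"
    unfolding segment_rt_def clamp_def by auto
  fix z e assume "z \<in> segment_rt x y" "0 < (e::real)"
  then obtain t where t: "t \<in> {0..dist x y}" "z = seg_param x y t" unfolding segment_rt_def by auto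
  obtain q where "q \<in> \<rat>" "t < q" "q < t + e"
    using Rats_dense_in_real[of t "t + e"] \<open>0 < e\<close> by auto
  then have "dist (seg_param x y (clamp q)) z < e"
    using t by (auto simp: dist_seg_param clamp_def)
  then show "\<exists>a\<in>(\<lambda>q. seg_param x y (clamp q)) ` \<rat>. dist a z < e"
    using \<open>q \<in> \<rat>\<close> by blast
qed

lemma S_sets_subset_B0_sets: "(S_sets :: 'a set set) \<subseteq> B0_sets"
  unfolding S_sets_def by (intro B0.sigma_sets_subset) (auto simp: segment_rt_in_B0_sets)

lemma S_completion_subset_G_sets: "(S_completion :: 'a set set) \<subseteq> G_sets"
proof
  fix X :: "'a set" assume "X \<in> S_completion"
  then obtain A N M where X: "X = A \<union> N" and "A \<in> S_sets" "M \<in> S_sets" "N \<subseteq> M"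
    and "length_measure M = 0"
    unfolding S_completion_def by auto
  then have "A \<in> G_sets" "M \<in> G_sets"
    using S_sets_subset_B0_sets B0_sets_subset_G_sets by auto
  show "X \<in> G_sets" unfolding G_sets_def
  proof (intro CollectI allI)
    fix x y :: 'a
    have "seg_trace x y M \<in> null_sets lebesgue"
      using \<open>M \<in> G_sets\<close> \<open>length_measure M = 0\<close>
      unfolding G_sets_def length_measure_eq_0_iff by auto
    then have "seg_trace x y N \<in> null_sets lebesgue"
      using seg_trace_mono[OF \<open>N \<subseteq> M\<close>] by (metis negligible_iff_null_sets negligible_subset)
    moreover have "seg_trace x y A \<in> sets lebesgue"
      using \<open>A \<in> G_sets\<close> unfolding G_sets_def by auto
    ultimately show "seg_trace x y X \<in> sets lebesgue"
      unfolding X seg_trace_Un by auto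
  qed
qed

lemma seg_image_in_S_sets:
  fixes x y :: 'a
  assumes "B \<in> sets borel"
  shows "seg_image x y B \<in> S_sets"
proof -
  have "B \<in> sigma_sets UNIV (range (\<lambda>(a, b). {a..b :: real}))"
    using assms by (simp add: borel_eq_atLeastAtMost)
  then show ?thesis
  proof (induction rule: sigma_sets.induct)
    case (Basic I)
    then obtain a b where I: "I = {a..b}" by auto
    show ?case
    proof (cases "max a 0 \<le> min b (dist x y)")
      case True
      have "seg_image x y I = seg_image x y {max a 0..min b (dist x y)}"
        unfolding seg_image_def I by simp
      also have "\<dots> \<in> S_sets"
        using True by (simp add: seg_image_atLeastAtMost segment_rt_in_S_sets)
      finally show ?thesis .
    next
      case False
      then have "seg_image x y I = {}" unfolding seg_image_def I by auto
      then show ?thesis by simp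
    qed
  next
    case Empty
    show ?case by (simp add: seg_image_def)
  next
    case (Compl B)
    have "seg_image x y (UNIV - B) = segment_rt x y - seg_image x y B"
      using inj_on_seg_param[of x y] unfolding seg_image_def segment_rt_def inj_on_def by blast
    then show ?case using Compl.IH by (simp add: S.Diff segment_rt_in_S_sets)
  next
    case (Union B)
    have "seg_image x y (\<Union>i. B i) = (\<Union>i. seg_image x y (B i))"
      unfolding seg_image_def by blast
    then show ?case using Union.IH by auto
  qed
qed

text \<open>A point of \<open>[x,y]\<close> has parameter its distance from \<open>x\<close>, and \<open>s \<mapsto> d(x, \<gamma>\<^sub>a\<^sub>b s)\<close> is
  1-Lipschitz.\<close>

lemma negligible_seg_trace_seg_image:
  fixes a b x y :: 'a
  assumes "negligible Z"
  shows "negligible (seg_trace x y (seg_image a b Z))"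
proof -
  let ?I = "{0..dist a b}" and ?f = "\<lambda>s. dist x (seg_param a b s)"
  have "negligible (?f ` (Z \<inter> ?I))"
  proof (rule negligible_locally_Lipschitz_image)
    show "negligible (Z \<inter> ?I)" using assms negligible_subset by blast
    fix u assume u: "u \<in> Z \<inter> ?I"
    have "norm (?f v - ?f u) \<le> 1 * norm (v - u)" if "v \<in> Z \<inter> ?I" for v
      using abs_dist_diff_le[of "seg_param a b v" x "seg_param a b u"] u that
      by (simp add: dist_seg_param dist_commute)
    then show "\<exists>T B. open T \<and> u \<in> T \<and> (\<forall>v\<in>Z \<inter> ?I \<inter> T. norm (?f v - ?f u) \<le> B * norm (v - u))"
      by (intro exI[of _ UNIV] exI[of _ 1]) auto
  qed simp
  moreover have "seg_trace x y (seg_image a b Z) \<subseteq> ?f ` (Z \<inter> ?I)"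
  proof
    fix t assume "t \<in> seg_trace x y (seg_image a b Z)"
    then obtain s where t: "t \<in> {0..dist x y}" and s: "s \<in> Z \<inter> ?I" "seg_param x y t = seg_param a b s"
      unfolding seg_trace_def seg_image_def by auto
    then have "t = ?f s" using dist_seg_param_left[OF t] by simp
    then show "t \<in> ?f ` (Z \<inter> ?I)" using s(1) by blast
  qed
  ultimately show ?thesis using negligible_subset by blast
qed

lemma seg_param_in_skeleton:
  fixes D :: "'a set"
  assumes dense: "\<And>z e. 0 < e \<Longrightarrow> \<exists>a\<in>D. dist a z < e" and t: "0 < t" "t < dist x y"
  shows "seg_param x y t \<in> skeleton D"
proof -
  let ?z = "seg_param x y t"
  have "t \<in> {0..dist x y}" using t by simp
  then have xz: "dist x ?z = t" and zy: "dist ?z y = dist x y - t"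
    by (simp_all add: dist_seg_param_left dist_seg_param_right)
  obtain a where "a \<in> D" "dist a x < t"
    using dense[of t x] t by auto
  obtain b where "b \<in> D" "dist b y < dist x y - t"
    using dense[of "dist x y - t" y] t by auto
  have "dist a ?z + dist ?z y = dist a y"
  proof (rule between_move_endpoint)
    show "dist x ?z + dist ?z y = dist x y" using xz zy by simp
    show "dist x a < dist x ?z" using xz \<open>dist a x < t\<close> by (simp add: dist_commute)
  qed
  then have "dist y ?z + dist ?z a = dist y a" by (metis add.commute dist_commute)
  then have "dist b ?z + dist ?z a = dist b a"
    by (rule between_move_endpoint) (use zy \<open>dist b y < dist x y - t\<close> in \<open>simp add: dist_commute\<close>)
  then show ?thesis
    unfolding skeleton_def segment_rt_eq_between using \<open>a \<in> D\<close> \<open>b \<in> D\<close> by auto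
qed

lemma length_measure_compl_skeleton_Un:
  fixes D :: "'a set"
  assumes "countable D" "\<And>z e. 0 < e \<Longrightarrow> \<exists>a\<in>D. dist a z < e" "\<And>a b. negligible (N a b)"
  shows "length_measure (- skeleton D \<union> (\<Union>a\<in>D. \<Union>b\<in>D. seg_image a b (N a b))) = 0"
proof -
  have "negligible (seg_trace x y (- skeleton D \<union> (\<Union>a\<in>D. \<Union>b\<in>D. seg_image a b (N a b))))" for x y
  proof -
    have "seg_trace x y (- skeleton D) \<subseteq> {0, dist x y}"
    proof
      fix t assume "t \<in> seg_trace x y (- skeleton D)"
      then have "t \<in> {0..dist x y}" "seg_param x y t \<notin> skeleton D" unfolding seg_trace_def by auto
      then show "t \<in> {0, dist x y}"
        using seg_param_in_skeleton[OF assms(2), of t x y] by (cases "t = 0 \<or> t = dist x y") auto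
    qed
    then have "negligible (seg_trace x y (- skeleton D))"
      by (rule negligible_subset[rotated]) simp
    moreover have "negligible (\<Union>a\<in>D. \<Union>b\<in>D. seg_trace x y (seg_image a b (N a b)))"
      using \<open>countable D\<close> assms(3)
      by (intro negligible_countable_Union countable_image) (auto intro: negligible_seg_trace_seg_image)
    ultimately show ?thesis
      unfolding seg_trace_Un seg_trace_UN by (rule negligible_Un)
  qed
  then show ?thesis
    unfolding length_measure_eq_0_iff by (simp add: negligible_iff_null_sets null_sets_def)
qed

lemma G_sets_subset_S_completion:
  assumes "separable_metric (UNIV :: 'a set)"
  shows "(G_sets :: 'a set set) \<subseteq> S_completion"
proof
  fix X :: "'a set" assume "X \<in> G_sets"
  obtain D :: "'a set" where "countable D" and dense: "\<And>z e. 0 < e \<Longrightarrow> \<exists>a\<in>D. dist a z < e"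
    using separable_metricE[OF assms] by blast
  have "seg_trace a b X \<in> sets lebesgue" for a b
    using \<open>X \<in> G_sets\<close> unfolding G_sets_def by auto
  then have "\<exists>B N. B \<in> sets borel \<and> N \<in> sets borel \<and> negligible N \<and>
      B \<subseteq> seg_trace a b X \<and> seg_trace a b X \<subseteq> B \<union> N" for a b
    by (rule lebesgue_set_between_borel) blast
  then obtain B N where "\<And>a b. B a b \<in> sets borel" "\<And>a b. N a b \<in> sets borel"
    "\<And>a b. negligible (N a b)" "\<And>a b. B a b \<subseteq> seg_trace a b X"
    "\<And>a b. seg_trace a b X \<subseteq> B a b \<union> N a b"
    by metis
  define A where "A = (\<Union>a\<in>D. \<Union>b\<in>D. seg_image a b (B a b))"
  define M where "M = - skeleton D \<union> (\<Union>a\<in>D. \<Union>b\<in>D. seg_image a b (N a b))"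
  have "- skeleton D \<in> S_sets"
    using S.compl_sets[OF skeleton_in_S_sets[OF \<open>countable D\<close>]] by (simp add: Compl_eq_Diff_UNIV)
  then have "A \<in> S_sets" "M \<in> S_sets"
    unfolding A_def M_def using \<open>countable D\<close> \<open>\<And>a b. B a b \<in> sets borel\<close> \<open>\<And>a b. N a b \<in> sets borel\<close>
    by (auto intro!: S.countable_UN'' seg_image_in_S_sets)
  have "A \<subseteq> X"
    unfolding A_def using \<open>\<And>a b. B a b \<subseteq> seg_trace a b X\<close> by (rule UN_seg_image_subset)
  have "X - A \<subseteq> M"
    unfolding A_def M_def using \<open>\<And>a b. seg_trace a b X \<subseteq> B a b \<union> N a b\<close>
    by (rule Diff_UN_seg_image_subset)
  moreover have "length_measure M = 0"
    unfolding M_def using \<open>countable D\<close> dense \<open>\<And>a b. negligible (N a b)\<close>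
    by (rule length_measure_compl_skeleton_Un)
  ultimately have "A \<union> (X - A) \<in> S_completion"
    using \<open>A \<in> S_sets\<close> \<open>M \<in> S_sets\<close> by (intro S_completionI)
  then show "X \<in> S_completion" using \<open>A \<subseteq> X\<close> by (simp add: Un_absorb1)
qed

end

theorem proposition4:
  assumes "real_tree (UNIV :: 'a::metric_space set)"
  shows "((S_sets :: 'a set set) \<subseteq> B0_sets \<and> (B0_sets :: 'a set set) \<subseteq> G_sets
           \<and> (S_completion :: 'a set set) \<subseteq> G_sets)
         \<and> (separable_metric (UNIV :: 'a set) \<longrightarrow>
           (B0_sets :: 'a set set) = sets borel \<and> (S_completion :: 'a set set) = G_sets)"
  using S_sets_subset_B0_sets[OF assms] B0_sets_subset_G_sets[OF assms]
    S_completion_subset_G_sets[OF assms] B0_sets_eq_borel G_sets_subset_S_completion[OF assms]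
  by blast

end
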